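(* The Hilbert series $\sum_{n\ge0}(\dim_k (A_k)_n)t^n$ of $A_k$ equals $(1-7t+7t^2-t^3)^{-1}$.
   Context: Let $k$ be a field. Label the points of the Fano plane by $1,\dots,7$ so that its directed lines are $123,145,167,246,275,374,365$. For $i,j,l\in\{1,\dots,7\}$ put $\varepsilon^{ijl}=1$ if $(i,j,l)$ is a cyclic rotation of one of these directed lines, $\varepsilon^{ijl}=-1$ if $(j,i,l)$ is such a cyclic rotation, and $\varepsilon^{ijl}=0$ otherwise. Let $A_k=k\langle x_1,\dots,x_7\rangle/(r_1,\dots,r_7)$, graded by $\deg x_i=1$, where $r_i=\sum_{m,n=1}^7\varepsilon^{imn}x_mx_n$; explicitly $r_1=[x_2,x_3]+[x_4,x_5]+[x_6,x_7]$, $r_2=[x_3,x_1]+[x_4,x_6]+[x_7,x_5]$, $r_3=[x_1,x_2]+[x_6,x_5]+[x_7,x_4]$, $r_4=[x_5,x_1]+[x_3,x_7]+[x_6,x_2]$, $r_5=[x_1,x_4]+[x_2,x_7]+[x_3,x_6]$, $r_6=[x_7,x_1]+[x_5,x_3]+[x_2,x_4]$, $r_7=[x_1,x_6]+[x_4,x_3]+[x_5,x_2]$. *)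

theory Defs
  imports Main "HOL-Library.Function_Algebras" "HOL-Computational_Algebra.Formal_Power_Series"
begin

text \<open>Elements of the free associative algebra k<x_1,...,x_7> are represented as
  coefficient functions on words (lists of letters); a word [i1,...,in] stands for the
  monomial x_i1 ... x_in.\<close>

type_synonym 'k ncpoly = "nat list \<Rightarrow> 'k"

definition letters :: "nat set" where "letters = {1..7}"

definition free_alg :: "'k::field ncpoly set" where
  "free_alg = {f. finite {w. f w \<noteq> 0} \<and> (\<forall>w. f w \<noteq> 0 \<longrightarrow> set w \<subseteq> letters)}"

definition nc_scale :: "'k::field \<Rightarrow> 'k ncpoly \<Rightarrow> 'k ncpoly" where
  "nc_scale c f = (\<lambda>w. c * f w)"

definition nc_add :: "'k::field ncpoly \<Rightarrow> 'k ncpoly \<Rightarrow> 'k ncpoly" where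
  "nc_add f g = (\<lambda>w. f w + g w)"

definition nc_mult :: "'k::field ncpoly \<Rightarrow> 'k ncpoly \<Rightarrow> 'k ncpoly" where
  "nc_mult f g = (\<lambda>w. \<Sum>i\<le>length w. f (take i w) * g (drop i w))"

definition gen :: "nat \<Rightarrow> 'k::field ncpoly" where
  "gen i = (\<lambda>w. if w = [i] then 1 else 0)"

definition fano_lines :: "(nat \<times> nat \<times> nat) list" where
  "fano_lines = [(1,2,3),(1,4,5),(1,6,7),(2,4,6),(2,7,5),(3,7,4),(3,6,5)]"

definition cyc_line :: "nat \<Rightarrow> nat \<Rightarrow> nat \<Rightarrow> bool" where
  "cyc_line i j l = (\<exists>(a,b,c)\<in>set fano_lines.
      (i,j,l) = (a,b,c) \<or> (i,j,l) = (b,c,a) \<or> (i,j,l) = (c,a,b))"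

definition eps :: "nat \<Rightarrow> nat \<Rightarrow> nat \<Rightarrow> int" where
  "eps i j l = (if cyc_line i j l then 1 else if cyc_line j i l then -1 else 0)"

definition rel :: "nat \<Rightarrow> 'k::field ncpoly" where
  "rel i = (\<lambda>w. \<Sum>m\<in>letters. \<Sum>n\<in>letters.
      of_int (eps i m n) * nc_mult (gen m) (gen n) w)"

definition rel_ideal :: "'k::field ncpoly set" where
  "rel_ideal = \<Inter>{J. J \<subseteq> free_alg \<and> (\<lambda>_. 0) \<in> J \<and> (\<forall>i\<in>letters. rel i \<in> J) \<and>
       (\<forall>f\<in>J. \<forall>g\<in>J. nc_add f g \<in> J) \<and>
       (\<forall>a\<in>free_alg. \<forall>f\<in>J. nc_mult a f \<in> J \<and> nc_mult f a \<in> J)}"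

definition hom_part :: "nat \<Rightarrow> 'k::field ncpoly set" where
  "hom_part n = {f \<in> free_alg. \<forall>w. f w \<noteq> 0 \<longrightarrow> length w = n}"

text \<open>dim_k (A_k)_n, where (A_k)_n is the image of the degree-n part of the free algebra
  in the quotient, i.e. hom_part n / (rel_ideal \<inter> hom_part n).\<close>
definition hilb_dim :: "'k::field itself \<Rightarrow> nat \<Rightarrow> nat" where
  "hilb_dim _ n = vector_space.dim (nc_scale :: 'k \<Rightarrow> 'k ncpoly \<Rightarrow> 'k ncpoly) (hom_part n)
     - vector_space.dim (nc_scale :: 'k \<Rightarrow> 'k ncpoly \<Rightarrow> 'k ncpoly) (rel_ideal \<inter> hom_part n)"

definition hilbert_series :: "'k::field itself \<Rightarrow> rat fps" where
  "hilbert_series K = Abs_fps (\<lambda>n. of_nat (hilb_dim K n))"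

end

theory Submission
  imports Defs
begin

text \<open>The relations can be read as rewriting rules x6 x1 \<rightarrow> x1 x6 + (x4 x3 - x3 x4 + x5 x2 - x2 x5)
  (from r7) and x7 x_j \<rightarrow> x_j x7 + (quadratic terms in x1, ..., x6) for j \<noteq> 7 (from r_(7 - j)).
  Every word reduces to a combination of normal words, which avoid the factors 6 1 and 7 j, so these
  span A. For independence the reduction is packaged as operators rho a on coefficient functions
  (prepend x_a and reduce); checking that they satisfy the relations, where the only non-trivial
  case is the overlap 7 6 1, yields an action of the free algebra on which rel_ideal acts trivially,
  and acting on the empty word recovers every element supported on normal words. The normal words
  of length n are the words u 7^k with u over 1, ..., 6 avoiding 6 1; their number a_n satisfies
  a_(n+2) + a_n = 6 a_(n+1) + 1, which gives the series 1 / ((1 - t) (1 - 6 t + t^2)).\<close>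

abbreviation is_word :: "nat list \<Rightarrow> bool" where
  "is_word v \<equiv> set v \<subseteq> letters"

definition words :: "nat \<Rightarrow> nat list set" where
  "words n = {v. is_word v \<and> length v = n}"

definition words_upto :: "nat \<Rightarrow> nat list set" where
  "words_upto n = {v. is_word v \<and> length v \<le> n}"

definition supp :: "'k::field ncpoly \<Rightarrow> nat list set" where
  "supp f = {w. f w \<noteq> 0}"

definition monomial :: "nat list \<Rightarrow> 'k::field ncpoly" where
  "monomial u = (\<lambda>w. if w = u then 1 else 0)"

lemma sum_fun_apply: "(\<Sum>i\<in>S. f i) x = (\<Sum>i\<in>S. f i x)"
  by (induct S rule: infinite_finite_induct) auto

lemma letters_eq: "letters = {1, 2, 3, 4, 5, 6, 7}"
  by (auto simp: letters_def)

lemma letters_simps [simp]: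
  "Suc 0 \<in> letters" "1 \<in> letters" "2 \<in> letters" "3 \<in> letters" "4 \<in> letters" "5 \<in> letters"
  "6 \<in> letters" "7 \<in> letters"
  by (simp_all add: letters_def)

lemma finite_words [simp]: "finite (words n)"
  unfolding words_def by (rule finite_lists_length_eq) (simp add: letters_def)

lemma finite_words_upto [simp]: "finite (words_upto n)"
  unfolding words_upto_def by (rule finite_lists_length_le) (simp add: letters_def)

lemma card_words: "card (words n) = 7 ^ n"
  unfolding words_def by (subst card_lists_length_eq) (auto simp: letters_def)

lemma supp_monomial [simp]: "supp (monomial u :: 'k::field ncpoly) = {u}"
  by (simp add: supp_def monomial_def)

lemma nc_scale_simps [simp]:
  "nc_scale 0 f = 0" "nc_scale 1 f = f" "nc_scale c 0 = 0" "nc_scale (- c) f = - nc_scale c f"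
  by (simp_all add: nc_scale_def fun_eq_iff)

lemma nc_add_eq_plus: "nc_add f g = f + g"
  by (simp add: nc_add_def fun_eq_iff)

interpretation ncv: vector_space "nc_scale :: 'k::field \<Rightarrow> 'k ncpoly \<Rightarrow> 'k ncpoly"
  by unfold_locales (simp_all add: nc_scale_def fun_eq_iff algebra_simps)

interpretation ncp: vector_space_pair "nc_scale :: 'k::field \<Rightarrow> 'k ncpoly \<Rightarrow> 'k ncpoly" nc_scale ..

abbreviation nc_linear :: "('k::field ncpoly \<Rightarrow> 'k ncpoly) \<Rightarrow> bool" where
  "nc_linear \<equiv> Vector_Spaces.linear nc_scale nc_scale"

lemma nc_linearI:
  assumes "\<And>f g. T (f + g) = T f + T g" and "\<And>c f. T (nc_scale c f) = nc_scale c (T f)"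
  shows "nc_linear T"
  unfolding Vector_Spaces.linear_iff by (intro conjI ncv.vector_space_axioms allI assms)

lemma nc_linear_comp: "nc_linear S \<Longrightarrow> nc_linear T \<Longrightarrow> nc_linear (\<lambda>z. S (T z))"
  using Vector_Spaces.linear_compose[of nc_scale nc_scale T nc_scale S] by (simp add: comp_def)

lemma monomial_expansion:
  assumes "finite S" and "supp f \<subseteq> S"
  shows "f = (\<Sum>v\<in>S. nc_scale (f v) (monomial v))"
proof
  fix w
  have "(\<Sum>v\<in>S. nc_scale (f v) (monomial v)) w = (\<Sum>v\<in>S. if v = w then f v else 0)"
    by (auto simp: sum_fun_apply nc_scale_def monomial_def intro!: sum.cong)
  also have "\<dots> = f w"
    using assms by (auto simp: sum.delta' supp_def)
  finally show "f w = (\<Sum>v\<in>S. nc_scale (f v) (monomial v)) w" ..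
qed

lemma free_alg_iff: "f \<in> free_alg \<longleftrightarrow> finite (supp f) \<and> (\<forall>v\<in>supp f. is_word v)"
  by (simp add: free_alg_def supp_def)

lemma hom_part_iff: "f \<in> hom_part n \<longleftrightarrow> supp f \<subseteq> words n"
  using finite_subset[OF _ finite_words]
  by (auto simp: hom_part_def free_alg_iff words_def supp_def)

lemma supp_add: "supp (f + g) \<subseteq> supp f \<union> supp g"
  by (auto simp: supp_def)

lemma supp_scale: "supp (nc_scale c f) \<subseteq> supp f"
  by (auto simp: supp_def nc_scale_def)

lemma subspace_free_alg: "ncv.subspace free_alg"
  unfolding ncv.subspace_def
proof (intro conjI ballI allI)
  show "0 \<in> free_alg" by (simp add: free_alg_iff supp_def)
next
  fix f g :: "'k::field ncpoly" assume "f \<in> free_alg" "g \<in> free_alg"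
  then show "f + g \<in> free_alg"
    using supp_add[of f g] by (auto simp: free_alg_iff intro: finite_subset)
next
  fix c and f :: "'k::field ncpoly" assume "f \<in> free_alg"
  then show "nc_scale c f \<in> free_alg"
    using supp_scale[of c f] by (auto simp: free_alg_iff intro: finite_subset)
qed

lemma subspace_hom_part: "ncv.subspace (hom_part n)"
  unfolding ncv.subspace_def
proof (intro conjI ballI allI)
  show "0 \<in> hom_part n" by (simp add: hom_part_iff supp_def)
next
  fix f g :: "'k::field ncpoly" assume "f \<in> hom_part n" "g \<in> hom_part n"
  then show "f + g \<in> hom_part n" using supp_add[of f g] by (auto simp: hom_part_iff)
next
  fix c and f :: "'k::field ncpoly" assume "f \<in> hom_part n"
  then show "nc_scale c f \<in> hom_part n" using supp_scale[of c f] by (auto simp: hom_part_iff)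
qed

lemma finite_supp_free_alg: "f \<in> free_alg \<Longrightarrow> finite (supp f)"
  by (simp add: free_alg_iff)

lemma supp_free_alg_is_word: "f \<in> free_alg \<Longrightarrow> v \<in> supp f \<Longrightarrow> is_word v"
  by (simp add: free_alg_iff)

lemma hom_part_free_alg: "f \<in> hom_part n \<Longrightarrow> f \<in> free_alg"
  by (simp add: hom_part_def)

lemma monomial_hom_part: "is_word v \<Longrightarrow> monomial v \<in> hom_part (length v)"
  by (simp add: hom_part_iff words_def)

lemma monomial_free_alg: "is_word v \<Longrightarrow> monomial v \<in> free_alg"
  by (rule hom_part_free_alg[OF monomial_hom_part])

lemma free_alg_expansion:
  "f \<in> free_alg \<Longrightarrow> f = (\<Sum>v\<in>supp f. nc_scale (f v) (monomial v))"
  by (rule monomial_expansion) (simp_all add: finite_supp_free_alg)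

lemma linear_free_alg_expansion:
  "nc_linear T \<Longrightarrow> f \<in> free_alg \<Longrightarrow> T f = (\<Sum>v\<in>supp f. nc_scale (f v) (T (monomial v)))"
  by (subst free_alg_expansion) (simp_all add: ncp.linear_sum ncp.linear_scale)

lemma linear_eq_on_free_alg:
  assumes "nc_linear S" and "nc_linear T" and "\<And>v. is_word v \<Longrightarrow> S (monomial v) = T (monomial v)"
    and f: "f \<in> free_alg"
  shows "S f = T f"
  using assms(3) supp_free_alg_is_word[OF f]
  by (simp add: linear_free_alg_expansion[OF assms(1) f] linear_free_alg_expansion[OF assms(2) f])

lemma linear_image_free_alg:
  assumes "nc_linear T" and "\<And>v. is_word v \<Longrightarrow> T (monomial v) \<in> free_alg" and f: "f \<in> free_alg"
  shows "T f \<in> free_alg"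
  unfolding linear_free_alg_expansion[OF assms(1) f]
  using assms(2) supp_free_alg_is_word[OF f]
  by (intro ncv.subspace_sum[OF subspace_free_alg] ncv.subspace_scale[OF subspace_free_alg]) auto

lemma linear_image_hom_part:
  assumes "nc_linear T" and "\<And>v. is_word v \<Longrightarrow> T (monomial v) \<in> hom_part (length v + d)"
    and f: "f \<in> hom_part n"
  shows "T f \<in> hom_part (n + d)"
proof -
  have f': "f \<in> free_alg" "supp f \<subseteq> words n"
    using f by (auto simp: hom_part_iff hom_part_free_alg)
  show ?thesis
    unfolding linear_free_alg_expansion[OF assms(1) f'(1)]
    using assms(2) f'(2)
    by (intro ncv.subspace_sum[OF subspace_hom_part] ncv.subspace_scale[OF subspace_hom_part])
      (auto simp: words_def)
qed

definition lmult :: "nat \<Rightarrow> 'k::field ncpoly \<Rightarrow> 'k ncpoly" where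
  "lmult a z = (\<lambda>w. case w of [] \<Rightarrow> 0 | b # w' \<Rightarrow> if b = a then z w' else 0)"

lemma linear_lmult: "nc_linear (lmult a)"
  by (rule nc_linearI) (auto simp: lmult_def nc_scale_def split: list.split)

lemma lmult_monomial [simp]: "lmult a (monomial v) = monomial (a # v)"
  by (auto simp: lmult_def monomial_def split: list.split)

lemma lmult_hom_part:
  assumes "a \<in> letters" and "z \<in> hom_part n"
  shows "lmult a z \<in> hom_part (Suc n)"
proof -
  have "lmult a (monomial v) \<in> hom_part (length v + 1)" if "is_word v" for v
    using monomial_hom_part[of "a # v"] that assms(1) by simp
  from linear_image_hom_part[OF linear_lmult this assms(2)] show ?thesis by simp
qed

text \<open>Only words no longer than w contribute to the coefficient of w, so that the sum is finite
  and lin_ext F is linear on all coefficient functions; it is the linear extension of F as soon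
  as F never shortens words.\<close>
definition lin_ext :: "(nat list \<Rightarrow> 'k::field ncpoly) \<Rightarrow> 'k ncpoly \<Rightarrow> 'k ncpoly" where
  "lin_ext F z = (\<lambda>w. \<Sum>v\<in>words_upto (length w). z v * F v w)"

definition never_shortens :: "(nat list \<Rightarrow> 'k::field ncpoly) \<Rightarrow> bool" where
  "never_shortens F \<longleftrightarrow> (\<forall>v w. is_word v \<longrightarrow> F v w \<noteq> 0 \<longrightarrow> length v \<le> length w)"

lemma linear_lin_ext: "nc_linear (lin_ext F)"
  by (rule nc_linearI)
    (simp_all add: lin_ext_def nc_scale_def fun_eq_iff algebra_simps sum.distrib sum_distrib_left)

lemma lin_ext_eq_sum:
  assumes F: "never_shortens F" and f: "f \<in> free_alg"
  shows "lin_ext F f = (\<Sum>v\<in>supp f. nc_scale (f v) (F v))"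
proof
  fix w
  have "lin_ext F f w = (\<Sum>v\<in>words_upto (length w) \<inter> supp f. f v * F v w)"
    unfolding lin_ext_def by (rule sum.mono_neutral_right) (auto simp: supp_def)
  also have "\<dots> = (\<Sum>v\<in>supp f. f v * F v w)"
    using F supp_free_alg_is_word[OF f]
    by (intro sum.mono_neutral_left) (auto simp: finite_supp_free_alg[OF f] words_upto_def never_shortens_def)
  finally show "lin_ext F f w = (\<Sum>v\<in>supp f. nc_scale (f v) (F v)) w"
    by (simp add: sum_fun_apply nc_scale_def)
qed

lemma lin_ext_monomial: "never_shortens F \<Longrightarrow> is_word u \<Longrightarrow> lin_ext F (monomial u) = F u"
  by (simp add: lin_ext_eq_sum monomial_free_alg) (simp add: monomial_def)

lemma never_shortens_if_raising:
  "(\<And>v. is_word v \<Longrightarrow> F v \<in> hom_part (Suc (length v))) \<Longrightarrow> never_shortens F"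
  unfolding never_shortens_def hom_part_iff words_def supp_def by fastforce

lemma lin_ext_hom_part:
  assumes "\<And>v. is_word v \<Longrightarrow> F v \<in> hom_part (Suc (length v))" and "z \<in> hom_part n"
  shows "lin_ext F z \<in> hom_part (Suc n)"
  using linear_image_hom_part[OF linear_lin_ext, of F 1] assms
    lin_ext_monomial[OF never_shortens_if_raising[OF assms(1)]] by simp

lemma linear_nc_mult_left: "nc_linear (\<lambda>a. nc_mult a f)"
  by (rule nc_linearI)
    (simp_all add: nc_mult_def nc_scale_def fun_eq_iff algebra_simps sum.distrib sum_distrib_left)

lemma linear_nc_mult_right: "nc_linear (\<lambda>f. nc_mult a f)"
  by (rule nc_linearI)
    (simp_all add: nc_mult_def nc_scale_def fun_eq_iff algebra_simps sum.distrib sum_distrib_left)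

lemma nc_mult_monomial: "nc_mult (monomial u) (monomial v) = (monomial (u @ v) :: 'k::field ncpoly)"
proof
  fix w :: "nat list"
  have "(take i w = u \<and> drop i w = v) \<longleftrightarrow> (i = length u \<and> w = u @ v)" if "i \<le> length w" for i
    using that by (auto simp: min_def)
  then have "nc_mult (monomial u) (monomial v) w = (\<Sum>i\<le>length w. if i = length u \<and> w = u @ v then 1 else (0::'k))"
    unfolding nc_mult_def monomial_def by (intro sum.cong) auto
  also have "\<dots> = monomial (u @ v) w"
    by (auto simp: monomial_def)
  finally show "nc_mult (monomial u) (monomial v) w = (monomial (u @ v) w :: 'k)" .
qed

lemma nc_mult_free_alg: "a \<in> free_alg \<Longrightarrow> f \<in> free_alg \<Longrightarrow> nc_mult a f \<in> free_alg"
  using linear_image_free_alg[OF linear_nc_mult_left, of f]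
    linear_image_free_alg[OF linear_nc_mult_right] nc_mult_monomial monomial_free_alg
  by (metis set_append sup.bounded_iff)

lemma gen_eq_monomial: "gen a = monomial [a]"
  by (simp add: gen_def monomial_def)

lemma lmult_eq_nc_mult_gen: "f \<in> free_alg \<Longrightarrow> lmult a f = nc_mult (gen a) f"
  by (rule linear_eq_on_free_alg[OF linear_lmult linear_nc_mult_right])
    (simp_all add: gen_eq_monomial nc_mult_monomial)

lemma rel_expansion:
  "rel i = (\<Sum>m\<in>letters. \<Sum>n\<in>letters. nc_scale (of_int (eps i m n)) (monomial [m, n] :: 'k::field ncpoly))"
  by (simp add: rel_def gen_eq_monomial nc_mult_monomial sum_fun_apply nc_scale_def fun_eq_iff)

lemma rel_hom_part: "rel i \<in> hom_part 2"
proof -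
  have "monomial [m, n] \<in> hom_part 2" if "m \<in> letters" "n \<in> letters" for m n
    using that monomial_hom_part[of "[m, n]"] by (simp add: numeral_2_eq_2)
  then show ?thesis
    unfolding rel_expansion
    by (intro ncv.subspace_sum[OF subspace_hom_part] ncv.subspace_scale[OF subspace_hom_part])
qed

lemma rel_ideal_least:
  assumes "J \<subseteq> free_alg" and "0 \<in> J" and "\<And>i. i \<in> letters \<Longrightarrow> rel i \<in> J"
    and "\<And>f g. f \<in> J \<Longrightarrow> g \<in> J \<Longrightarrow> f + g \<in> J"
    and "\<And>a f. a \<in> free_alg \<Longrightarrow> f \<in> J \<Longrightarrow> nc_mult a f \<in> J \<and> nc_mult f a \<in> J"
  shows "rel_ideal \<subseteq> J"
  unfolding rel_ideal_def using assms by (auto simp: nc_add_eq_plus zero_fun_def[symmetric])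

lemma rel_ideal_free_alg: "rel_ideal \<subseteq> free_alg"
  by (rule rel_ideal_least)
    (simp_all add: ncv.subspace_0[OF subspace_free_alg] ncv.subspace_add[OF subspace_free_alg]
      hom_part_free_alg[OF rel_hom_part] nc_mult_free_alg)

lemma
  shows rel_in_rel_ideal: "i \<in> letters \<Longrightarrow> rel i \<in> rel_ideal"
    and add_rel_ideal: "f \<in> rel_ideal \<Longrightarrow> g \<in> rel_ideal \<Longrightarrow> f + g \<in> rel_ideal"
    and nc_mult_rel_ideal_left: "a \<in> free_alg \<Longrightarrow> f \<in> rel_ideal \<Longrightarrow> nc_mult a f \<in> rel_ideal"
    and nc_mult_rel_ideal_right: "a \<in> free_alg \<Longrightarrow> f \<in> rel_ideal \<Longrightarrow> nc_mult f a \<in> rel_ideal"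
  unfolding rel_ideal_def nc_add_eq_plus[symmetric] by blast+

lemma subspace_rel_ideal: "ncv.subspace rel_ideal"
  unfolding ncv.subspace_def
proof (intro conjI ballI allI add_rel_ideal)
  show "0 \<in> rel_ideal"
    unfolding rel_ideal_def zero_fun_def by blast
next
  fix c and f :: "'k::field ncpoly" assume f: "f \<in> rel_ideal"
  have "nc_scale c f = nc_mult (nc_scale c (monomial [])) f"
    by (rule linear_eq_on_free_alg[OF ncv.linear_scale_self linear_nc_mult_right])
      (use f rel_ideal_free_alg in \<open>auto simp: ncp.linear_scale[OF linear_nc_mult_left] nc_mult_monomial\<close>)
  also have "\<dots> \<in> rel_ideal"
    by (intro nc_mult_rel_ideal_left f ncv.subspace_scale[OF subspace_free_alg] monomial_free_alg) simp
  finally show "nc_scale c f \<in> rel_ideal" .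
qed

lemma zero_rel_ideal [simp]: "0 \<in> rel_ideal" "(\<lambda>_. 0) \<in> rel_ideal"
  using ncv.subspace_0[OF subspace_rel_ideal] by (simp_all add: zero_fun_def)

lemma lmult_rel_ideal: "a \<in> letters \<Longrightarrow> f \<in> rel_ideal \<Longrightarrow> lmult a f \<in> rel_ideal"
  using rel_ideal_free_alg monomial_free_alg[of "[a]"]
  by (subst lmult_eq_nc_mult_gen) (auto simp: gen_eq_monomial intro: nc_mult_rel_ideal_left)

lemma linear_diff_rel_ideal:
  assumes S: "nc_linear S" and T: "nc_linear T"
    and ST: "\<And>v. is_word v \<Longrightarrow> S (monomial v) - T (monomial v) \<in> rel_ideal" and y: "y \<in> free_alg"
  shows "S y - T y \<in> rel_ideal"
proof -
  have ST_linear: "nc_linear (\<lambda>y. S y - T y)"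
    using S T by (rule ncp.linear_compose_sub)
  have "S y - T y = (\<Sum>v\<in>supp y. nc_scale (y v) (S (monomial v) - T (monomial v)))"
    by (rule linear_free_alg_expansion[OF ST_linear y])
  also have "\<dots> \<in> rel_ideal"
    using ST supp_free_alg_is_word[OF y]
    by (intro ncv.subspace_sum[OF subspace_rel_ideal] ncv.subspace_scale[OF subspace_rel_ideal]) auto
  finally show ?thesis .
qed

lemma rel_times_monomial:
  "nc_mult (rel i) (monomial v) =
    (\<Sum>m\<in>letters. \<Sum>n\<in>letters. nc_scale (of_int (eps i m n)) (lmult m (lmult n (monomial v))) :: 'k::field ncpoly)"
  by (simp add: rel_expansion ncp.linear_sum[OF linear_nc_mult_left] ncp.linear_scale[OF linear_nc_mult_left]
      nc_mult_monomial)

section \<open>The action of the generators on normal words\<close>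

lemma one_to_six: "{1..6::nat} = {1, 2, 3, 4, 5, 6}"
  by auto

text \<open>Relation r7 says x6 x1 = x1 x6 + corr6 x, where x = (x_m) are the generators.\<close>
definition corr6 :: "(nat \<Rightarrow> 'k::field ncpoly \<Rightarrow> 'k ncpoly) \<Rightarrow> 'k ncpoly \<Rightarrow> 'k ncpoly" where
  "corr6 T y = T 4 (T 3 y) - T 3 (T 4 y) + T 5 (T 2 y) - T 2 (T 5 y)"

text \<open>The line through 7 and j \<in> {1..6} is {j, 7 - j, 7}, so x7 and x_j occur together only in
  r_(7 - j), and only in the commutator [x7, x_j]; this relation says x7 x_j = x_j x7 + corr7 x j.\<close>
definition corr7 :: "(nat \<Rightarrow> 'k::field ncpoly \<Rightarrow> 'k ncpoly) \<Rightarrow> nat \<Rightarrow> 'k ncpoly \<Rightarrow> 'k ncpoly" where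
  "corr7 T j y = nc_scale (- of_int (eps (7 - j) 7 j))
     (\<Sum>m\<in>{1..6}. \<Sum>n\<in>{1..6}. nc_scale (of_int (eps (7 - j) m n)) (T m (T n y)))"

lemma corr7_explicit:
  "corr7 T 1 y = T 3 (T 5 y) - T 2 (T 4 y) + T 4 (T 2 y) - T 5 (T 3 y)"
  "corr7 T 2 y = T 1 (T 4 y) + T 3 (T 6 y) - T 4 (T 1 y) - T 6 (T 3 y)"
  "corr7 T 3 y = T 5 (T 1 y) - T 1 (T 5 y) - T 2 (T 6 y) + T 6 (T 2 y)"
  "corr7 T 4 y = T 2 (T 1 y) - T 1 (T 2 y) + T 5 (T 6 y) - T 6 (T 5 y)"
  "corr7 T 5 y = T 1 (T 3 y) - T 3 (T 1 y) - T 4 (T 6 y) + T 6 (T 4 y)"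
  "corr7 T 6 y = T 2 (T 3 y) - T 3 (T 2 y) + T 4 (T 5 y) - T 5 (T 4 y)"
  unfolding corr7_def one_to_six by (simp_all add: eps_def cyc_line_def fano_lines_def algebra_simps)

lemma linear_corr6:
  assumes "\<And>m. nc_linear (T m)"
  shows "nc_linear (corr6 T)"
proof -
  have "nc_linear (\<lambda>y. T a (T b y))" for a b
    by (rule nc_linear_comp[OF assms assms])
  then show ?thesis
    unfolding corr6_def[abs_def] by (intro ncp.linear_compose_add ncp.linear_compose_sub)
qed

lemma linear_corr7:
  assumes "\<And>m. nc_linear (T m)"
  shows "nc_linear (corr7 T j)"
proof -
  have "nc_linear (\<lambda>y. T a (T b y))" for a b
    by (rule nc_linear_comp[OF assms assms])
  then show ?thesis
    unfolding corr7_def[abs_def]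
    by (intro ncp.linear_compose_scale_right ncp.linear_compose_sum ballI)
qed

lemma corr6_hom_part:
  assumes "\<And>m z n. m \<in> letters \<Longrightarrow> z \<in> hom_part n \<Longrightarrow> T m z \<in> hom_part (Suc n)"
    and "y \<in> hom_part n"
  shows "corr6 T y \<in> hom_part (Suc (Suc n))"
  unfolding corr6_def using assms
  by (intro ncv.subspace_add[OF subspace_hom_part] ncv.subspace_diff[OF subspace_hom_part])
    (simp_all add: letters_def)

lemma corr7_hom_part:
  assumes "\<And>m z n. m \<in> {1..6} \<Longrightarrow> z \<in> hom_part n \<Longrightarrow> T m z \<in> hom_part (Suc n)"
    and "y \<in> hom_part n"
  shows "corr7 T j y \<in> hom_part (Suc (Suc n))"
  unfolding corr7_def using assms
  by (intro ncv.subspace_scale[OF subspace_hom_part] ncv.subspace_sum[OF subspace_hom_part]) simp_all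

lemma corr6_cong: "(\<And>m. m \<in> {2..5} \<Longrightarrow> S m = T m) \<Longrightarrow> corr6 S = corr6 T"
  by (simp add: corr6_def[abs_def])

lemma corr7_cong: "(\<And>m. m \<in> {1..6} \<Longrightarrow> S m = T m) \<Longrightarrow> corr7 S j = corr7 T j"
  by (simp add: corr7_def[abs_def])

text \<open>For a normal word v, nf6 v and nf7 v are the normal forms of x6 v and x7 v; rho a z reduces
  x_a z for z supported on normal words, and rho_low does so for the letters a \<le> 6.\<close>
fun nf6 :: "nat list \<Rightarrow> 'k::field ncpoly" where
  "nf6 [] = monomial [6]"
| "nf6 (a # v) = (if a = 1 then lmult 1 (nf6 v) + corr6 lmult (monomial v) else monomial (6 # a # v))"

lemma nf6_Cons_1: "a = 1 \<Longrightarrow> nf6 (a # v) = lmult 1 (nf6 v) + corr6 lmult (monomial v)"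
  by (simp only: nf6.simps simp_thms if_True)

lemma nf6_Cons: "a \<noteq> 1 \<Longrightarrow> nf6 (a # v) = monomial (6 # a # v)"
  by simp

declare nf6.simps(2) [simp del]

definition rho_low :: "nat \<Rightarrow> 'k::field ncpoly \<Rightarrow> 'k ncpoly" where
  "rho_low a = (if a = 6 then lin_ext nf6 else lmult a)"

fun nf7 :: "nat list \<Rightarrow> 'k::field ncpoly" where
  "nf7 [] = monomial [7]"
| "nf7 (a # v) = (if a = 7 then monomial (7 # 7 # v) else rho_low a (nf7 v) + corr7 rho_low a (monomial v))"

lemma nf7_Cons_7: "nf7 (7 # v) = monomial (7 # 7 # v)"
  by simp

lemma nf7_Cons: "a \<noteq> 7 \<Longrightarrow> nf7 (a # v) = rho_low a (nf7 v) + corr7 rho_low a (monomial v)"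
  by (simp only: nf7.simps if_False)

declare nf7.simps(2) [simp del]

definition rho :: "nat \<Rightarrow> 'k::field ncpoly \<Rightarrow> 'k ncpoly" where
  "rho a = (if a = 7 then lin_ext nf7 else rho_low a)"

lemma nf6_hom_part: "is_word v \<Longrightarrow> (nf6 v :: 'k::field ncpoly) \<in> hom_part (Suc (length v))"
proof (induction v)
  case Nil
  show ?case using monomial_hom_part[of "[6]"] by (simp add: letters_def)
next
  case (Cons a v)
  then have a: "a \<in> letters" and v: "is_word v" by auto
  show ?case
  proof (cases "a = 1")
    case True
    have "corr6 lmult (monomial v :: 'k ncpoly) \<in> hom_part (Suc (Suc (length v)))"
      by (intro corr6_hom_part lmult_hom_part monomial_hom_part v)
    moreover have "lmult 1 (nf6 v :: 'k ncpoly) \<in> hom_part (Suc (Suc (length v)))"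
      by (rule lmult_hom_part) (simp_all add: letters_def Cons.IH[OF v])
    ultimately show ?thesis
      unfolding nf6_Cons_1[OF True] length_Cons by (blast intro: ncv.subspace_add[OF subspace_hom_part])
  next
    case False
    then show ?thesis using monomial_hom_part[of "6 # a # v"] a v by (simp add: nf6_Cons letters_def)
  qed
qed

lemma linear_rho_low: "nc_linear (rho_low a)"
  by (simp add: rho_low_def linear_lin_ext linear_lmult)

lemma rho_low_hom_part: "a \<in> letters \<Longrightarrow> z \<in> hom_part n \<Longrightarrow> rho_low a z \<in> hom_part (Suc n)"
  by (simp add: rho_low_def lin_ext_hom_part nf6_hom_part lmult_hom_part)

lemma rho_low_eq_lmult: "a \<noteq> 6 \<Longrightarrow> rho_low a = lmult a"
  by (simp add: rho_low_def)

lemma rho_low6_monomial: "is_word v \<Longrightarrow> rho_low 6 (monomial v) = nf6 v"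
  by (simp add: rho_low_def lin_ext_monomial never_shortens_if_raising nf6_hom_part)

lemma rho_low_free_alg: "a \<in> letters \<Longrightarrow> y \<in> free_alg \<Longrightarrow> rho_low a y \<in> free_alg"
  by (rule linear_image_free_alg[OF linear_rho_low])
    (auto intro: hom_part_free_alg rho_low_hom_part monomial_hom_part)

lemma nf7_hom_part: "is_word v \<Longrightarrow> (nf7 v :: 'k::field ncpoly) \<in> hom_part (Suc (length v))"
proof (induction v)
  case Nil
  show ?case using monomial_hom_part[of "[7]"] by (simp add: letters_def)
next
  case (Cons a v)
  then have a: "a \<in> letters" and v: "is_word v" by auto
  show ?case
  proof (cases "a = 7")
    case True
    then show ?thesis using monomial_hom_part[of "7 # 7 # v"] v by (simp add: nf7_Cons_7 letters_def)
  next
    case False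
    have "corr7 rho_low a (monomial v :: 'k ncpoly) \<in> hom_part (Suc (Suc (length v)))"
    proof (rule corr7_hom_part)
      show "rho_low m z \<in> hom_part (Suc n)" if "m \<in> {1..6}" "z \<in> hom_part n" for m n and z :: "'k ncpoly"
        using that by (intro rho_low_hom_part) (auto simp: letters_def)
    qed (rule monomial_hom_part[OF v])
    moreover have "rho_low a (nf7 v :: 'k ncpoly) \<in> hom_part (Suc (Suc (length v)))"
      using rho_low_hom_part[OF a] Cons.IH[OF v] by blast
    ultimately show ?thesis
      unfolding nf7_Cons[OF False] length_Cons by (blast intro: ncv.subspace_add[OF subspace_hom_part])
  qed
qed

lemma linear_rho: "nc_linear (rho a)"
  by (simp add: rho_def linear_lin_ext linear_rho_low)

lemma rho_hom_part: "a \<in> letters \<Longrightarrow> z \<in> hom_part n \<Longrightarrow> rho a z \<in> hom_part (Suc n)"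
  by (simp add: rho_def lin_ext_hom_part nf7_hom_part rho_low_hom_part)

lemma rho_free_alg: "a \<in> letters \<Longrightarrow> y \<in> free_alg \<Longrightarrow> rho a y \<in> free_alg"
  by (rule linear_image_free_alg[OF linear_rho])
    (auto intro: hom_part_free_alg rho_hom_part monomial_hom_part)

lemma rho7_monomial: "is_word v \<Longrightarrow> rho 7 (monomial v) = nf7 v"
  by (simp add: rho_def lin_ext_monomial never_shortens_if_raising nf7_hom_part)

lemma rho_eq_rho_low: "a \<noteq> 7 \<Longrightarrow> rho a = rho_low a"
  by (simp add: rho_def)

section \<open>The operators rho a satisfy the relations\<close>

lemma rho_low_r7:
  fixes y :: "'k::field ncpoly"
  assumes "y \<in> free_alg"
  shows "rho_low 6 (rho_low 1 y) = rho_low 1 (rho_low 6 y) + corr6 rho_low y"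
proof (rule linear_eq_on_free_alg[OF _ _ _ assms])
  show "nc_linear (\<lambda>y. rho_low 6 (rho_low 1 y) :: 'k ncpoly)"
    by (rule nc_linear_comp[OF linear_rho_low linear_rho_low])
  show "nc_linear (\<lambda>y. rho_low 1 (rho_low 6 y) + corr6 rho_low y :: 'k ncpoly)"
    by (rule ncp.linear_compose_add[OF nc_linear_comp[OF linear_rho_low linear_rho_low]
          linear_corr6[OF linear_rho_low]])
  have "corr6 rho_low = (corr6 lmult :: 'k ncpoly \<Rightarrow> 'k ncpoly)"
    by (rule corr6_cong) (simp add: rho_low_eq_lmult)
  then show "rho_low 6 (rho_low 1 (monomial v)) = rho_low 1 (rho_low 6 (monomial v)) + corr6 rho_low (monomial v :: 'k ncpoly)"
    if "is_word v" for v
    using that by (simp add: rho_low_eq_lmult rho_low6_monomial nf6_Cons_1)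
qed

lemma rho7_commute_if_monomial:
  fixes y :: "'k::field ncpoly"
  assumes j: "j \<in> {1..6}" and mon: "\<And>v. is_word v \<Longrightarrow> rho 7 (rho_low j (monomial v)) = (nf7 (j # v) :: 'k ncpoly)"
    and y: "y \<in> free_alg"
  shows "rho 7 (rho_low j y) = rho_low j (rho 7 y) + corr7 rho_low j y"
proof (rule linear_eq_on_free_alg[OF _ _ _ y])
  show "nc_linear (\<lambda>y. rho 7 (rho_low j y) :: 'k ncpoly)"
    by (rule nc_linear_comp[OF linear_rho linear_rho_low])
  show "nc_linear (\<lambda>y. rho_low j (rho 7 y) + corr7 rho_low j y :: 'k ncpoly)"
    by (rule ncp.linear_compose_add[OF nc_linear_comp[OF linear_rho_low linear_rho]
          linear_corr7[OF linear_rho_low]])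
  show "rho 7 (rho_low j (monomial v)) = rho_low j (rho 7 (monomial v)) + corr7 rho_low j (monomial v :: 'k ncpoly)"
    if "is_word v" for v
    using j that by (simp add: mon rho7_monomial nf7_Cons)
qed

lemma rho7_commute_lmult:
  fixes y :: "'k::field ncpoly"
  assumes "j \<in> {1..5}" and "y \<in> free_alg"
  shows "rho 7 (rho_low j y) = rho_low j (rho 7 y) + corr7 rho_low j y"
  using assms by (intro rho7_commute_if_monomial) (auto simp: rho_low_eq_lmult rho7_monomial letters_def)

text \<open>Since x7 acts through the commutator rules x7 x_j = x_j x7 + corr7 x j, applying them to
  both sides of relation r7 (the overlap 7 6 1) must give the same result; D a b is what the
  rules produce from x7 x_a x_b besides x_a x_b x7.\<close>
lemma corr7_r7_overlap:
  fixes T :: "nat \<Rightarrow> 'k::field ncpoly \<Rightarrow> 'k ncpoly" and s :: "'k ncpoly"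
  assumes T: "\<And>a. nc_linear (T a)"
  defines "D a b \<equiv> T a (corr7 T b s) + corr7 T a (T b s)"
  shows "D 6 1 = D 1 6 + D 4 3 - D 3 4 + D 5 2 - D 2 5"
  unfolding D_def corr7_explicit
  by (simp add: ncp.linear_add[OF T] ncp.linear_diff[OF T] algebra_simps)

lemma rho7_nf6: "is_word v \<Longrightarrow> rho 7 (nf6 v) = (nf7 (6 # v) :: 'k::field ncpoly)"
proof (induction v)
  case Nil
  show ?case by (simp add: rho7_monomial)
next
  case (Cons a v)
  then have a: "a \<in> letters" and v: "is_word v" by auto
  show ?case
  proof (cases "a = 1")
    case False
    then show ?thesis using a v by (simp add: nf6_Cons rho7_monomial)
  next
    case True
    let ?T = "rho_low :: nat \<Rightarrow> 'k ncpoly \<Rightarrow> 'k ncpoly" and ?C = "corr7 rho_low"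
    define s :: "'k ncpoly" where "s = monomial v"
    define t where "t = rho 7 s"
    define D where "D a b = ?T a (?C b s) + ?C a (?T b s)" for a b
    have s: "s \<in> free_alg" using v by (simp add: s_def monomial_free_alg)
    have t: "t \<in> free_alg" using s by (simp add: t_def rho_free_alg letters_def)
    have K1: "rho 7 (?T b s) = ?T b t + ?C b s" if "b \<in> {1..6}" for b
    proof (cases "b = 6")
      case True
      have "rho 7 (?T 6 s) = rho 7 (nf6 v)"
        by (simp add: s_def rho_low6_monomial v)
      also have "\<dots> = nf7 (6 # v)"
        by (rule Cons.IH[OF v])
      also have "\<dots> = ?T 6 t + ?C 6 s"
        by (simp add: nf7_Cons t_def s_def rho7_monomial v)
      finally show ?thesis
        using True by simp
    next
      case False
      with that show ?thesis
        unfolding t_def by (intro rho7_commute_lmult s) auto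
    qed
    have K2: "rho 7 (?T a (?T b s)) = ?T a (?T b t) + D a b" if "a \<in> {1..5}" "b \<in> {1..6}" for a b
    proof -
      have "?T b s \<in> free_alg" using that s by (intro rho_low_free_alg) (auto simp: letters_def)
      with that(1) have "rho 7 (?T a (?T b s)) = ?T a (rho 7 (?T b s)) + ?C a (?T b s)"
        by (rule rho7_commute_lmult)
      then show ?thesis
        using K1[OF that(2)] by (simp add: D_def ncp.linear_add[OF linear_rho_low] algebra_simps)
    qed
    have "nf6 (a # v) = ?T 1 (?T 6 s) + (?T 4 (?T 3 s) - ?T 3 (?T 4 s) + ?T 5 (?T 2 s) - ?T 2 (?T 5 s))"
      using True v by (simp add: s_def corr6_def rho_low_eq_lmult rho_low6_monomial nf6_Cons_1)
    then have "rho 7 (nf6 (a # v)) = rho 7 (?T 1 (?T 6 s)) + (rho 7 (?T 4 (?T 3 s)) - rho 7 (?T 3 (?T 4 s))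
        + rho 7 (?T 5 (?T 2 s)) - rho 7 (?T 2 (?T 5 s)))"
      by (simp only: ncp.linear_add[OF linear_rho] ncp.linear_diff[OF linear_rho])
    also have "\<dots> = ?T 1 (?T 6 t) + corr6 ?T t + (D 1 6 + D 4 3 - D 3 4 + D 5 2 - D 2 5)"
      using K2[of 1 6] K2[of 4 3] K2[of 3 4] K2[of 5 2] K2[of 2 5] by (simp add: corr6_def)
    also have "\<dots> = ?T 6 (?T 1 t) + D 6 1"
      using rho_low_r7[OF t] corr7_r7_overlap[where T = rho_low and s = s, OF linear_rho_low] by (simp add: D_def)
    also have "\<dots> = nf7 (6 # a # v)"
      using True v by (simp add: D_def t_def s_def nf7_Cons rho7_monomial rho_low_eq_lmult ncp.linear_add[OF linear_rho_low])
    finally show ?thesis .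
  qed
qed

lemma rho7_commute:
  fixes y :: "'k::field ncpoly"
  assumes j: "j \<in> {1..6}" and y: "y \<in> free_alg"
  shows "rho 7 (rho_low j y) = rho_low j (rho 7 y) + corr7 rho_low j y"
proof (cases "j = 6")
  case True
  show ?thesis
    by (rule rho7_commute_if_monomial[OF j _ y]) (simp add: True rho_low6_monomial rho7_nf6)
qed (use assms in \<open>simp add: rho7_commute_lmult\<close>)

lemma cyc_line_iff:
  "cyc_line i j l \<longleftrightarrow> (i, j, l) \<in> {(1,2,3), (2,3,1), (3,1,2), (1,4,5), (4,5,1), (5,1,4), (1,6,7),
    (6,7,1), (7,1,6), (2,4,6), (4,6,2), (6,2,4), (2,7,5), (7,5,2), (5,2,7), (3,7,4), (7,4,3), (4,3,7),
    (3,6,5), (6,5,3), (5,3,6)}"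
  unfolding cyc_line_def fano_lines_def by auto

lemma eps_line_through_7:
  assumes j: "j \<in> {1..6}"
  shows "eps (7 - j) j 7 = - eps (7 - j) 7 j"
    and "eps (7 - j) 7 j * eps (7 - j) 7 j = 1"
    and "n \<in> letters \<Longrightarrow> n \<noteq> j \<Longrightarrow> eps (7 - j) 7 n = 0"
    and "n \<in> letters \<Longrightarrow> n \<noteq> j \<Longrightarrow> eps (7 - j) n 7 = 0"
proof -
  have j': "j \<in> {1, 2, 3, 4, 5, 6}" using j by auto
  then show "eps (7 - j) j 7 = - eps (7 - j) 7 j" and "eps (7 - j) 7 j * eps (7 - j) 7 j = 1"
    by (elim insertE emptyE; simp add: eps_def cyc_line_iff)+
  assume "n \<in> letters" and "n \<noteq> j"
  then have "n \<in> {1, 2, 3, 4, 5, 6, 7}" by (auto simp: letters_def)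
  with j' \<open>n \<noteq> j\<close> show "eps (7 - j) 7 n = 0" and "eps (7 - j) n 7 = 0"
    by (elim insertE emptyE; simp add: eps_def cyc_line_iff)+
qed

lemma sum_letters_split:
  "(\<Sum>m\<in>letters. \<Sum>n\<in>letters. h m n) =
    h 7 7 + (\<Sum>n\<in>{1..6}. h 7 n) + (\<Sum>m\<in>{1..6}. h m 7) + (\<Sum>m\<in>{1..6}. \<Sum>n\<in>{1..6}. h m n)"
proof -
  have L: "letters = insert 7 {1..6}" by (auto simp: letters_def)
  show ?thesis unfolding L by (simp add: sum.distrib add_ac)
qed

lemma sum_eps_line7:
  fixes T :: "nat \<Rightarrow> 'k::field ncpoly \<Rightarrow> 'k ncpoly"
  assumes j: "j \<in> {1..6}"
  shows "(\<Sum>m\<in>letters. \<Sum>n\<in>letters. nc_scale (of_int (eps (7 - j) m n)) (T m (T n y))) =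
    nc_scale (of_int (eps (7 - j) 7 j)) (T 7 (T j y) - T j (T 7 y) - corr7 T j y)"
proof -
  define e :: 'k where "e = of_int (eps (7 - j) 7 j)"
  define Q where "Q = (\<Sum>m\<in>{1..6}. \<Sum>n\<in>{1..6}. nc_scale (of_int (eps (7 - j) m n)) (T m (T n y)))"
  have ee: "e * e = 1"
    using eps_line_through_7(2)[OF j] unfolding e_def of_int_mult[symmetric] by simp
  have "(\<Sum>n\<in>{1..6}. nc_scale (of_int (eps (7 - j) 7 n)) (T 7 (T n y)))
      = (\<Sum>n\<in>{1..6}. if n = j then nc_scale e (T 7 (T j y)) else 0)"
    by (intro sum.cong refl) (auto simp: eps_line_through_7(3)[OF j] letters_def e_def)
  also have "\<dots> = nc_scale e (T 7 (T j y))"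
    using j by (simp add: sum.delta')
  finally have row: "(\<Sum>n\<in>{1..6}. nc_scale (of_int (eps (7 - j) 7 n)) (T 7 (T n y))) = nc_scale e (T 7 (T j y))" .
  have "(\<Sum>m\<in>{1..6}. nc_scale (of_int (eps (7 - j) m 7)) (T m (T 7 y)))
      = (\<Sum>m\<in>{1..6}. if m = j then - nc_scale e (T j (T 7 y)) else 0)"
    by (intro sum.cong refl) (auto simp: eps_line_through_7(1,4)[OF j] letters_def e_def)
  also have "\<dots> = - nc_scale e (T j (T 7 y))"
    using j by (simp add: sum.delta')
  finally have col: "(\<Sum>m\<in>{1..6}. nc_scale (of_int (eps (7 - j) m 7)) (T m (T 7 y))) = - nc_scale e (T j (T 7 y))" .
  have "eps (7 - j) 7 7 = 0"
    using eps_line_through_7(3)[OF j, of 7] j by auto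
  then have "(\<Sum>m\<in>letters. \<Sum>n\<in>letters. nc_scale (of_int (eps (7 - j) m n)) (T m (T n y))) =
      nc_scale e (T 7 (T j y)) - nc_scale e (T j (T 7 y)) + Q"
    unfolding sum_letters_split row col Q_def[symmetric] by simp
  also have "Q = - nc_scale e (corr7 T j y)"
    by (simp add: corr7_def Q_def e_def[symmetric] ee)
  also have "nc_scale e (T 7 (T j y)) - nc_scale e (T j (T 7 y)) + - nc_scale e (corr7 T j y) =
      nc_scale e (T 7 (T j y) - T j (T 7 y) - corr7 T j y)"
    by (simp add: ncv.scale_right_diff_distrib)
  finally show ?thesis
    unfolding e_def .
qed

lemma sum_eps_r7:
  "(\<Sum>m\<in>letters. \<Sum>n\<in>letters. nc_scale (of_int (eps 7 m n)) (T m (T n y))) =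
    T 1 (T 6 y) - T 6 (T 1 y) + corr6 T y"
  by (simp add: letters_eq eps_def cyc_line_def fano_lines_def corr6_def algebra_simps)

lemma rho_relation:
  fixes y :: "'k::field ncpoly"
  assumes i: "i \<in> letters" and y: "y \<in> free_alg"
  shows "(\<Sum>m\<in>letters. \<Sum>n\<in>letters. nc_scale (of_int (eps i m n)) (rho m (rho n y))) = 0"
proof (cases "i = 7")
  case True
  have "corr6 rho = (corr6 rho_low :: 'k ncpoly \<Rightarrow> 'k ncpoly)"
    by (rule corr6_cong) (simp add: rho_eq_rho_low)
  then show ?thesis
    using rho_low_r7[OF y] by (simp add: True sum_eps_r7 rho_eq_rho_low)
next
  case False
  define j where "j = 7 - i"
  have j: "j \<in> {1..6}" and i_eq: "i = 7 - j"
    using i False by (auto simp: letters_def j_def)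
  have "corr7 rho j = (corr7 rho_low j :: 'k ncpoly \<Rightarrow> 'k ncpoly)"
    by (rule corr7_cong) (simp add: rho_eq_rho_low)
  then show ?thesis
    using rho7_commute[OF j y] j unfolding i_eq sum_eps_line7[OF j] by (simp add: rho_eq_rho_low)
qed

section \<open>The action of the free algebra\<close>

fun rho_word :: "nat list \<Rightarrow> 'k::field ncpoly \<Rightarrow> 'k ncpoly" where
  "rho_word [] z = z"
| "rho_word (a # w) z = rho a (rho_word w z)"

lemma linear_rho_word: "nc_linear (rho_word w)"
proof (induction w)
  case Nil
  show ?case using ncv.linear_ident by (simp add: fun_eq_iff[symmetric])
next
  case (Cons a w)
  show ?case using nc_linear_comp[OF linear_rho Cons.IH] by (simp add: fun_eq_iff[symmetric])
qed

lemma rho_word_append: "rho_word (u @ v) z = rho_word u (rho_word v z)"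
  by (induction u) simp_all

lemma rho_word_hom_part: "is_word w \<Longrightarrow> z \<in> hom_part n \<Longrightarrow> rho_word w z \<in> hom_part (n + length w)"
  by (induction w) (simp_all add: rho_hom_part)

lemma rho_word_free_alg: "is_word w \<Longrightarrow> z \<in> free_alg \<Longrightarrow> rho_word w z \<in> free_alg"
  by (induction w) (simp_all add: rho_free_alg)

lemma never_shortens_rho_word:
  fixes z :: "'k::field ncpoly"
  assumes z: "z \<in> free_alg"
  shows "never_shortens (\<lambda>w. rho_word w z)"
  unfolding never_shortens_def
proof (intro allI impI)
  fix w x assume w: "is_word w" and nz: "rho_word w z x \<noteq> 0"
  have "rho_word w z = (\<Sum>u\<in>supp z. nc_scale (z u) (rho_word w (monomial u)))"
    by (rule linear_free_alg_expansion[OF linear_rho_word z])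
  with nz have "(\<Sum>u\<in>supp z. z u * rho_word w (monomial u) x) \<noteq> 0"
    by (simp add: sum_fun_apply nc_scale_def)
  then obtain u where "u \<in> supp z" and "z u * rho_word w (monomial u) x \<noteq> 0"
    by (rule sum.not_neutral_contains_not_neutral)
  moreover have "rho_word w (monomial u :: 'k ncpoly) \<in> hom_part (length u + length w)" if "u \<in> supp z"
    by (rule rho_word_hom_part[OF w monomial_hom_part[OF supp_free_alg_is_word[OF z that]]])
  ultimately show "length w \<le> length x"
    by (auto simp: hom_part_iff words_def supp_def)
qed

definition act :: "'k::field ncpoly \<Rightarrow> 'k ncpoly \<Rightarrow> 'k ncpoly" where
  "act f z = lin_ext (\<lambda>w. rho_word w z) f"

lemma linear_act_left: "nc_linear (\<lambda>f. act f z)"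
  unfolding act_def by (rule linear_lin_ext)

lemma linear_act_right: "nc_linear (act f)"
proof (rule nc_linearI)
  show "act f (y + z) = act f y + act f z" for y z
    by (simp add: act_def lin_ext_def ncp.linear_add[OF linear_rho_word] fun_eq_iff
        distrib_left sum.distrib)
  show "act f (nc_scale c z) = nc_scale c (act f z)" for c z
    unfolding act_def lin_ext_def ncp.linear_scale[OF linear_rho_word]
    by (simp add: fun_eq_iff nc_scale_def sum_distrib_left mult.left_commute)
qed

lemma act_eq_sum:
  "f \<in> free_alg \<Longrightarrow> z \<in> free_alg \<Longrightarrow> act f z = (\<Sum>w\<in>supp f. nc_scale (f w) (rho_word w z))"
  unfolding act_def by (rule lin_ext_eq_sum[OF never_shortens_rho_word])

lemma act_monomial: "is_word u \<Longrightarrow> z \<in> free_alg \<Longrightarrow> act (monomial u) z = rho_word u z"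
  unfolding act_def by (rule lin_ext_monomial[OF never_shortens_rho_word])

lemma act_free_alg: "f \<in> free_alg \<Longrightarrow> z \<in> free_alg \<Longrightarrow> act f z \<in> free_alg"
  by (simp add: act_eq_sum supp_free_alg_is_word rho_word_free_alg
      ncv.subspace_sum[OF subspace_free_alg] ncv.subspace_scale[OF subspace_free_alg])

lemma act_nc_mult:
  assumes a: "a \<in> free_alg" and f: "f \<in> free_alg" and z: "z \<in> free_alg"
  shows "act (nc_mult a f) z = act a (act f z)"
proof (rule linear_eq_on_free_alg[OF _ _ _ a])
  show "nc_linear (\<lambda>a. act (nc_mult a f) z)"
    by (rule nc_linear_comp[OF linear_act_left linear_nc_mult_left])
  show "nc_linear (\<lambda>a. act a (act f z))"
    by (rule linear_act_left)
  fix u :: "nat list" assume u: "is_word u"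
  have "act (nc_mult (monomial u) f) z = rho_word u (act f z)"
  proof (rule linear_eq_on_free_alg[OF _ _ _ f])
    show "nc_linear (\<lambda>f. act (nc_mult (monomial u) f) z)"
      by (rule nc_linear_comp[OF linear_act_left linear_nc_mult_right])
    show "nc_linear (\<lambda>f. rho_word u (act f z))"
      by (rule nc_linear_comp[OF linear_rho_word linear_act_left])
    show "act (nc_mult (monomial u) (monomial v)) z = rho_word u (act (monomial v) z)"
      if "is_word v" for v
      using u that z by (simp add: nc_mult_monomial act_monomial rho_word_append)
  qed
  then show "act (nc_mult (monomial u) f) z = act (monomial u) (act f z)"
    using u f z by (simp add: act_monomial act_free_alg)
qed

lemma act_rel:
  assumes i: "i \<in> letters" and z: "z \<in> free_alg"
  shows "act (rel i) z = 0"
proof -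
  have "act (rel i) z = (\<Sum>m\<in>letters. \<Sum>n\<in>letters. nc_scale (of_int (eps i m n)) (rho m (rho n z)))"
    unfolding rel_expansion
    by (simp add: ncp.linear_sum[OF linear_act_left] ncp.linear_scale[OF linear_act_left]
        act_monomial z)
  also have "\<dots> = 0"
    by (rule rho_relation[OF i z])
  finally show ?thesis .
qed

lemma act_rel_ideal:
  fixes f z :: "'k::field ncpoly"
  assumes "f \<in> rel_ideal" and "z \<in> free_alg"
  shows "act f z = 0"
proof -
  let ?J = "{f \<in> free_alg. \<forall>z\<in>free_alg. act f z = (0 :: 'k ncpoly)}"
  have "rel_ideal \<subseteq> ?J"
  proof (rule rel_ideal_least)
    show "0 \<in> ?J"
      using ncv.subspace_0[OF subspace_free_alg] ncp.linear_0[OF linear_act_left] by auto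
    show "rel i \<in> ?J" if "i \<in> letters" for i
      using that by (simp add: act_rel hom_part_free_alg[OF rel_hom_part])
    show "f + g \<in> ?J" if "f \<in> ?J" "g \<in> ?J" for f g
      using that by (simp add: ncv.subspace_add[OF subspace_free_alg] ncp.linear_add[OF linear_act_left])
    show "nc_mult a f \<in> ?J \<and> nc_mult f a \<in> ?J" if "a \<in> free_alg" "f \<in> ?J" for a f
      using that by (simp add: nc_mult_free_alg act_nc_mult act_free_alg ncp.linear_0[OF linear_act_right])
  qed auto
  with assms show ?thesis by blast
qed

section \<open>Reduction to normal form\<close>

lemma rule61_in_rel_ideal:
  assumes v: "is_word v"
  shows "monomial (6 # 1 # v) - monomial (1 # 6 # v) - corr6 lmult (monomial v) \<in> (rel_ideal :: 'k::field ncpoly set)"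
proof -
  have "nc_mult (rel 7) (monomial v) = monomial (1 # 6 # v) - monomial (6 # 1 # v) + corr6 lmult (monomial v :: 'k ncpoly)"
    unfolding rel_times_monomial sum_eps_r7 by simp
  moreover have "nc_mult (rel 7) (monomial v) \<in> (rel_ideal :: 'k ncpoly set)"
    by (intro nc_mult_rel_ideal_right monomial_free_alg v rel_in_rel_ideal) simp
  ultimately show ?thesis
    using ncv.subspace_neg[OF subspace_rel_ideal] by (metis add.commute diff_diff_eq2 diff_minus_eq_add minus_diff_eq)
qed

lemma rule7j_in_rel_ideal:
  assumes j: "j \<in> {1..6}" and v: "is_word v"
  shows "monomial (7 # j # v) - monomial (j # 7 # v) - corr7 lmult j (monomial v) \<in> (rel_ideal :: 'k::field ncpoly set)"
proof -
  define e :: 'k where "e = of_int (eps (7 - j) 7 j)"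
  have "nc_mult (rel (7 - j)) (monomial v) =
      nc_scale e (monomial (7 # j # v) - monomial (j # 7 # v) - corr7 lmult j (monomial v :: 'k ncpoly))"
    unfolding rel_times_monomial sum_eps_line7[OF j] by (simp add: e_def)
  then have "monomial (7 # j # v) - monomial (j # 7 # v) - corr7 lmult j (monomial v :: 'k ncpoly) =
      nc_scale e (nc_mult (rel (7 - j)) (monomial v))"
    using eps_line_through_7(2)[OF j] by (simp add: e_def of_int_mult[symmetric])
  also have "\<dots> \<in> rel_ideal"
    using j v by (intro ncv.subspace_scale[OF subspace_rel_ideal] nc_mult_rel_ideal_right
        monomial_free_alg rel_in_rel_ideal) (auto simp: letters_def)
  finally show ?thesis .
qed

lemma monomial_minus_nf6: "is_word v \<Longrightarrow> monomial (6 # v) - nf6 v \<in> (rel_ideal :: 'k::field ncpoly set)"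
proof (induction v)
  case Nil
  show ?case by (simp add:)
next
  case (Cons a v)
  then have a: "a \<in> letters" and v: "is_word v" by auto
  show ?case
  proof (cases "a = 1")
    case True
    have "monomial (6 # a # v) - nf6 (a # v) = lmult 1 (monomial (6 # v) - nf6 v)
        + (monomial (6 # 1 # v) - monomial (1 # 6 # v) - corr6 lmult (monomial v) :: 'k ncpoly)"
      by (simp add: True nf6_Cons_1 ncp.linear_diff[OF linear_lmult] algebra_simps)
    also have "\<dots> \<in> rel_ideal"
      by (intro ncv.subspace_add[OF subspace_rel_ideal] lmult_rel_ideal Cons.IH[OF v] rule61_in_rel_ideal[OF v])
        simp
    finally show ?thesis .
  qed (simp add: nf6_Cons)
qed

lemma lmult_minus_rho_low:
  fixes y :: "'k::field ncpoly"
  assumes "a \<in> letters" and "y \<in> free_alg"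
  shows "lmult a y - rho_low a y \<in> rel_ideal"
proof (cases "a = 6")
  case True
  show ?thesis
    unfolding True
    by (rule linear_diff_rel_ideal[OF linear_lmult linear_rho_low _ assms(2)])
      (simp add: rho_low6_monomial monomial_minus_nf6)
qed (simp add: rho_low_eq_lmult)

lemma corr7_lmult_minus_rho_low:
  fixes y :: "'k::field ncpoly"
  assumes y: "y \<in> free_alg"
  shows "corr7 lmult j y - corr7 rho_low j y \<in> rel_ideal"
proof -
  have step: "lmult m (lmult n y) - rho_low m (rho_low n y) \<in> rel_ideal" if "m \<in> {1..6}" "n \<in> {1..6}" for m n
  proof -
    have m: "m \<in> letters" and n: "n \<in> letters" using that by (auto simp: letters_def)
    have "lmult m (lmult n y) - rho_low m (rho_low n y) =
        lmult m (lmult n y - rho_low n y) + (lmult m (rho_low n y) - rho_low m (rho_low n y))"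
      by (simp add: ncp.linear_diff[OF linear_lmult])
    also have "\<dots> \<in> rel_ideal"
      by (intro ncv.subspace_add[OF subspace_rel_ideal] lmult_rel_ideal lmult_minus_rho_low
          rho_low_free_alg m n y)
    finally show ?thesis .
  qed
  have "corr7 lmult j y - corr7 rho_low j y = nc_scale (- of_int (eps (7 - j) 7 j))
      (\<Sum>m\<in>{1..6}. \<Sum>n\<in>{1..6}. nc_scale (of_int (eps (7 - j) m n))
        (lmult m (lmult n y) - rho_low m (rho_low n y)))"
    by (simp add: corr7_def ncv.scale_right_diff_distrib sum_subtractf)
  also have "\<dots> \<in> rel_ideal"
    using step by (intro ncv.subspace_scale[OF subspace_rel_ideal] ncv.subspace_sum[OF subspace_rel_ideal])
  finally show ?thesis .
qed

lemma monomial_minus_nf7: "is_word v \<Longrightarrow> monomial (7 # v) - nf7 v \<in> (rel_ideal :: 'k::field ncpoly set)"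
proof (induction v)
  case Nil
  show ?case by (simp add:)
next
  case (Cons j v)
  then have j: "j \<in> letters" and v: "is_word v" by auto
  show ?case
  proof (cases "j = 7")
    case False
    then have j6: "j \<in> {1..6}" using j by (auto simp: letters_def)
    have nf7: "nf7 v \<in> (free_alg :: 'k ncpoly set)"
      using nf7_hom_part[OF v] by (rule hom_part_free_alg)
    have "monomial (7 # j # v) - nf7 (j # v) =
        (monomial (7 # j # v) - monomial (j # 7 # v) - corr7 lmult j (monomial v))
        + lmult j (monomial (7 # v) - nf7 v) + (lmult j (nf7 v) - rho_low j (nf7 v))
        + (corr7 lmult j (monomial v) - corr7 rho_low j (monomial v :: 'k ncpoly))"
      by (simp add: False nf7_Cons ncp.linear_diff[OF linear_lmult] algebra_simps)
    also have "\<dots> \<in> rel_ideal"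
      using rule7j_in_rel_ideal[OF j6 v] Cons.IH[OF v] lmult_minus_rho_low[OF j nf7]
        corr7_lmult_minus_rho_low[OF monomial_free_alg[OF v]]
      by (intro ncv.subspace_add[OF subspace_rel_ideal] lmult_rel_ideal j)
    finally show ?thesis .
  qed (simp add: nf7_Cons_7)
qed

lemma lmult_minus_rho:
  fixes y :: "'k::field ncpoly"
  assumes "a \<in> letters" and "y \<in> free_alg"
  shows "lmult a y - rho a y \<in> rel_ideal"
proof (cases "a = 7")
  case True
  show ?thesis
    unfolding True
    by (rule linear_diff_rel_ideal[OF linear_lmult linear_rho _ assms(2)])
      (simp add: rho7_monomial monomial_minus_nf7)
qed (use assms in \<open>simp add: rho_eq_rho_low lmult_minus_rho_low\<close>)

definition nf :: "nat list \<Rightarrow> 'k::field ncpoly" where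
  "nf w = rho_word w (monomial [])"

lemma nf_hom_part: "is_word w \<Longrightarrow> nf w \<in> hom_part (length w)"
  using rho_word_hom_part[OF _ monomial_hom_part, of w "[]"] by (simp add: nf_def)

lemma monomial_minus_nf: "is_word w \<Longrightarrow> monomial w - nf w \<in> (rel_ideal :: 'k::field ncpoly set)"
proof (induction w)
  case Nil
  show ?case by (simp add: nf_def)
next
  case (Cons a w)
  then have a: "a \<in> letters" and w: "is_word w" by auto
  have "monomial (a # w) - nf (a # w) = lmult a (monomial w - nf w) + (lmult a (nf w) - rho a (nf w) :: 'k ncpoly)"
    by (simp add: nf_def ncp.linear_diff[OF linear_lmult])
  also have "\<dots> \<in> rel_ideal"
    by (intro ncv.subspace_add[OF subspace_rel_ideal] lmult_rel_ideal a Cons.IH w lmult_minus_rho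
        hom_part_free_alg[OF nf_hom_part])
  finally show ?case .
qed

section \<open>Normal words\<close>

text \<open>Normal words avoid the leading words 6 1 and 7 j (j \<noteq> 7) of the rewriting rules.\<close>
definition may_precede :: "nat \<Rightarrow> nat list \<Rightarrow> bool" where
  "may_precede a w \<longleftrightarrow> (a = 7 \<longrightarrow> w = [] \<or> hd w = 7) \<and> (a = 6 \<longrightarrow> w = [] \<or> hd w \<noteq> 1)"

fun normal_word :: "nat list \<Rightarrow> bool" where
  "normal_word [] = True"
| "normal_word (a # w) \<longleftrightarrow> a \<in> letters \<and> may_precede a w \<and> normal_word w"

lemma normal_word_is_word: "normal_word w \<Longrightarrow> is_word w"
  by (induction w) auto

definition normal_span :: "'k::field ncpoly set" where
  "normal_span = {z. \<forall>x. z x \<noteq> 0 \<longrightarrow> normal_word x}"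

lemma subspace_normal_span: "ncv.subspace normal_span"
  unfolding ncv.subspace_def normal_span_def by (auto simp: nc_scale_def) (metis add.right_neutral)

lemma monomial_normal_span: "normal_word w \<Longrightarrow> monomial w \<in> normal_span"
  by (simp add: normal_span_def monomial_def)

lemma lmult_normal_span: "a \<in> {1..5} \<Longrightarrow> z \<in> normal_span \<Longrightarrow> lmult a z \<in> normal_span"
  by (auto simp: normal_span_def lmult_def may_precede_def letters_def split: list.splits if_splits)

lemma lin_ext_normal_span:
  assumes "\<And>v. normal_word v \<Longrightarrow> F v \<in> normal_span" and "z \<in> normal_span"
  shows "lin_ext F z \<in> normal_span"
  unfolding normal_span_def
proof (intro CollectI allI impI)
  fix x assume "lin_ext F z x \<noteq> 0"
  then obtain v where "z v * F v x \<noteq> 0"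
    unfolding lin_ext_def by (rule sum.not_neutral_contains_not_neutral)
  then show "normal_word x"
    using assms by (auto simp: normal_span_def)
qed

lemma nf6_normal_span: "normal_word v \<Longrightarrow> (nf6 v :: 'k::field ncpoly) \<in> normal_span"
proof (induction v)
  case Nil
  show ?case by (simp add: monomial_normal_span may_precede_def)
next
  case (Cons a v)
  then have v: "normal_word v" by simp
  show ?case
  proof (cases "a = 1")
    case True
    have "corr6 lmult (monomial v :: 'k ncpoly) \<in> normal_span"
      unfolding corr6_def using v
      by (intro ncv.subspace_add[OF subspace_normal_span] ncv.subspace_diff[OF subspace_normal_span]
          lmult_normal_span monomial_normal_span) auto
    moreover have "lmult 1 (nf6 v :: 'k ncpoly) \<in> normal_span"
      using Cons.IH[OF v] by (intro lmult_normal_span) auto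
    ultimately show ?thesis
      unfolding nf6_Cons_1[OF True] by (rule ncv.subspace_add[OF subspace_normal_span, rotated])
  next
    case False
    with Cons.prems show ?thesis
      by (simp add: nf6_Cons monomial_normal_span may_precede_def)
  qed
qed

lemma rho_low_normal_span: "a \<in> {1..6} \<Longrightarrow> z \<in> normal_span \<Longrightarrow> rho_low a z \<in> normal_span"
  by (cases "a = 6") (auto simp: rho_low_def intro: lin_ext_normal_span nf6_normal_span lmult_normal_span)

lemma corr7_normal_span:
  assumes "\<And>m z. m \<in> {1..6} \<Longrightarrow> z \<in> normal_span \<Longrightarrow> T m z \<in> normal_span" and "y \<in> normal_span"
  shows "corr7 T j y \<in> normal_span"
  unfolding corr7_def using assms
  by (intro ncv.subspace_scale[OF subspace_normal_span] ncv.subspace_sum[OF subspace_normal_span]) simp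

lemma nf7_normal_span: "normal_word v \<Longrightarrow> nf7 v \<in> normal_span"
proof (induction v)
  case Nil
  show ?case by (simp add: monomial_normal_span may_precede_def)
next
  case (Cons a v)
  then have a: "a \<in> letters" and v: "normal_word v" by auto
  show ?case
  proof (cases "a = 7")
    case True
    with Cons.prems show ?thesis
      by (simp add: nf7_Cons_7 monomial_normal_span may_precede_def)
  next
    case False
    then have a6: "a \<in> {1..6}" using a by (auto simp: letters_def)
    show ?thesis
      unfolding nf7_Cons[OF False]
      by (intro ncv.subspace_add[OF subspace_normal_span] rho_low_normal_span corr7_normal_span
          a6 Cons.IH v monomial_normal_span)
  qed
qed

lemma rho_normal_span: "a \<in> letters \<Longrightarrow> z \<in> normal_span \<Longrightarrow> rho a z \<in> normal_span"
  by (cases "a = 7")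
    (auto simp: rho_def letters_def intro: lin_ext_normal_span nf7_normal_span rho_low_normal_span)

lemma nf_normal_span: "is_word w \<Longrightarrow> nf w \<in> normal_span"
proof (induction w)
  case Nil
  show ?case by (simp add: nf_def monomial_normal_span)
next
  case (Cons a w)
  then show ?case by (simp add: nf_def rho_normal_span)
qed

lemma rho_monomial_normal: "normal_word (a # v) \<Longrightarrow> rho a (monomial v) = monomial (a # v)"
proof -
  assume n: "normal_word (a # v)"
  then have v: "is_word v"
    by (auto dest: normal_word_is_word)
  consider "a = 7" | "a = 6" | "a \<noteq> 6" "a \<noteq> 7"
    by blast
  then show ?thesis
  proof cases
    case 1
    then have "v = [] \<or> hd v = 7" using n by (simp add: may_precede_def)
    then show ?thesis using 1 v by (cases v) (auto simp: rho7_monomial nf7_Cons_7)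
  next
    case 2
    then have "v = [] \<or> hd v \<noteq> 1" using n by (simp add: may_precede_def)
    then show ?thesis using 2 v by (cases v) (auto simp: rho_eq_rho_low rho_low6_monomial nf6_Cons)
  next
    case 3
    then show ?thesis by (auto simp: rho_eq_rho_low rho_low_eq_lmult)
  qed
qed

lemma nf_normal: "normal_word w \<Longrightarrow> nf w = monomial w"
proof (induction w)
  case (Cons a w)
  then show ?case using rho_monomial_normal[OF Cons.prems] by (simp add: nf_def)
qed (simp add: nf_def)

lemma rel_ideal_normal_span_eq_0:
  fixes g :: "'k::field ncpoly"
  assumes "g \<in> rel_ideal" and "g \<in> normal_span"
  shows "g = 0"
proof -
  have g: "g \<in> free_alg" using assms(1) rel_ideal_free_alg by blast
  have "g = (\<Sum>w\<in>supp g. nc_scale (g w) (monomial w))"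
    by (rule free_alg_expansion[OF g])
  also have "\<dots> = (\<Sum>w\<in>supp g. nc_scale (g w) (nf w))"
    using assms(2) by (intro sum.cong refl) (simp add: nf_normal normal_span_def supp_def)
  also have "\<dots> = act g (monomial [])"
    by (simp add: act_eq_sum g monomial_free_alg nf_def)
  also have "\<dots> = 0"
    using assms(1) by (rule act_rel_ideal) (simp add: monomial_free_alg)
  finally show ?thesis .
qed

lemma dim_eq_card_if_unitriangular:
  fixes b :: "nat list \<Rightarrow> 'k::field ncpoly"
  assumes A: "finite A" and sub: "b ` A \<subseteq> V" and span: "V \<subseteq> ncv.span (b ` A)"
    and delta: "\<And>v w. v \<in> A \<Longrightarrow> w \<in> A \<Longrightarrow> b v w = (if v = w then 1 else 0)"
  shows "ncv.dim V = card A"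
proof -
  have inj: "inj_on b A"
  proof (rule inj_onI)
    fix v w assume "v \<in> A" "w \<in> A" "b v = b w"
    then show "v = w" using delta[of v w] delta[of w w] by (auto split: if_splits)
  qed
  have "ncv.independent (b ` A)"
  proof (rule ncv.independent_if_scalars_zero)
    show "finite (b ` A)" using A by simp
    fix c x assume c: "(\<Sum>x\<in>b ` A. nc_scale (c x) x) = 0" and "x \<in> b ` A"
    then obtain w where w: "w \<in> A" and x: "x = b w" by blast
    have "0 = (\<Sum>v\<in>A. nc_scale (c (b v)) (b v)) w"
      using c by (simp add: sum.reindex[OF inj])
    also have "\<dots> = (\<Sum>v\<in>A. if v = w then c (b v) else 0)"
      by (auto simp: sum_fun_apply nc_scale_def delta[OF _ w] intro!: sum.cong)
    also have "\<dots> = c x"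
      using A w x by simp
    finally show "c x = 0" ..
  qed
  then have "card (b ` A) = ncv.dim V"
    by (rule ncv.basis_card_eq_dim[OF sub span])
  with card_image[OF inj] show ?thesis by simp
qed

lemma dim_hom_part: "ncv.dim (hom_part n :: 'k::field ncpoly set) = 7 ^ n"
proof -
  have "ncv.dim (hom_part n :: 'k ncpoly set) = card (words n)"
  proof (rule dim_eq_card_if_unitriangular)
    show "monomial ` words n \<subseteq> (hom_part n :: 'k ncpoly set)"
      using monomial_hom_part by (auto simp: words_def)
    show "hom_part n \<subseteq> ncv.span (monomial ` words n :: 'k ncpoly set)"
    proof
      fix f :: "'k ncpoly" assume "f \<in> hom_part n"
      then have "f = (\<Sum>v\<in>words n. nc_scale (f v) (monomial v))"
        by (intro monomial_expansion) (simp_all add: hom_part_iff)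
      also have "\<dots> \<in> ncv.span (monomial ` words n)"
        by (intro ncv.span_sum ncv.span_scale ncv.span_base) auto
      finally show "f \<in> ncv.span (monomial ` words n)" .
    qed
  qed (simp_all add: monomial_def)
  then show ?thesis by (simp add: card_words)
qed

definition normal_words :: "nat \<Rightarrow> nat list set" where
  "normal_words n = {w \<in> words n. normal_word w}"

lemma finite_normal_words [simp]: "finite (normal_words n)"
  by (simp add: normal_words_def)

lemma dim_rel_ideal_hom_part:
  "ncv.dim (rel_ideal \<inter> hom_part n :: 'k::field ncpoly set) = card (words n - normal_words n)"
proof (rule dim_eq_card_if_unitriangular)
  let ?A = "words n - normal_words n"
  define b :: "nat list \<Rightarrow> 'k ncpoly" where "b w = monomial w - nf w" for w
  have delta: "b v w = (if v = w then 1 else 0)" if "v \<in> ?A" "w \<in> ?A" for v w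
    using that nf_normal_span[of v] by (auto simp: b_def monomial_def normal_span_def normal_words_def words_def)
  have b_hom: "b w \<in> hom_part n" if "w \<in> words n" for w
    using that monomial_hom_part[of w] nf_hom_part[of w]
    by (auto simp: b_def words_def intro: ncv.subspace_diff[OF subspace_hom_part])
  have b_ideal: "b w \<in> rel_ideal" if "w \<in> words n" for w
    using that monomial_minus_nf[of w] by (simp add: b_def words_def)
  show "finite ?A" by simp
  show "b ` ?A \<subseteq> rel_ideal \<inter> hom_part n"
    using b_hom b_ideal by auto
  show "b v w = (if v = w then 1 else 0)" if "v \<in> ?A" "w \<in> ?A" for v w
    using that by (rule delta)
  show "rel_ideal \<inter> hom_part n \<subseteq> ncv.span (b ` ?A)"
  proof
    fix f :: "'k ncpoly" assume f: "f \<in> rel_ideal \<inter> hom_part n"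
    define g where "g = f - (\<Sum>v\<in>?A. nc_scale (f v) (b v))"
    have g_hom: "g \<in> hom_part n"
      unfolding g_def using f b_hom
      by (intro ncv.subspace_diff[OF subspace_hom_part] ncv.subspace_sum[OF subspace_hom_part]
          ncv.subspace_scale[OF subspace_hom_part]) auto
    have "g \<in> rel_ideal"
      unfolding g_def using f b_ideal
      by (intro ncv.subspace_diff[OF subspace_rel_ideal] ncv.subspace_sum[OF subspace_rel_ideal]
          ncv.subspace_scale[OF subspace_rel_ideal]) auto
    moreover have "g \<in> normal_span"
      unfolding normal_span_def
    proof (intro CollectI allI impI)
      fix x assume gx: "g x \<noteq> 0"
      then have "x \<in> words n" using g_hom by (auto simp: hom_part_iff supp_def)
      moreover have "x \<notin> ?A"
      proof
        assume x: "x \<in> ?A"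
        have "g x = f x - (\<Sum>v\<in>?A. nc_scale (f v) (b v)) x"
          by (simp add: g_def)
        also have "(\<Sum>v\<in>?A. nc_scale (f v) (b v)) x = (\<Sum>v\<in>?A. if v = x then f v else 0)"
          unfolding sum_fun_apply by (rule sum.cong) (simp_all add: nc_scale_def delta[OF _ x])
        also have "\<dots> = f x"
          using x by simp
        finally show False
          using gx by simp
      qed
      ultimately show "normal_word x" by (simp add: normal_words_def)
    qed
    ultimately have "g = 0" by (rule rel_ideal_normal_span_eq_0)
    then have "f = (\<Sum>v\<in>?A. nc_scale (f v) (b v))" by (simp add: g_def)
    also have "\<dots> \<in> ncv.span (b ` ?A)"
      by (intro ncv.span_sum ncv.span_scale ncv.span_base) auto
    finally show "f \<in> ncv.span (b ` ?A)" .
  qed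
qed

lemma hilb_dim_eq_card_normal_words: "hilb_dim TYPE('k::field) n = card (normal_words n)"
proof -
  have "normal_words n \<subseteq> words n" by (auto simp: normal_words_def)
  then have "card (words n - normal_words n) = 7 ^ n - card (normal_words n)"
    by (simp add: card_Diff_subset card_words)
  moreover have "card (normal_words n) \<le> 7 ^ n"
    using card_mono[OF finite_words \<open>normal_words n \<subseteq> words n\<close>] by (simp add: card_words)
  ultimately show ?thesis
    by (simp add: hilb_dim_def dim_hom_part dim_rel_ideal_hom_part)
qed

section \<open>Counting normal words\<close>

lemma card_normal_words_Suc:
  "card (normal_words (Suc n)) = (\<Sum>a\<in>letters. card {w \<in> normal_words n. may_precede a w})"
proof -
  let ?S = "SIGMA a:letters. {w \<in> normal_words n. may_precede a w}"
  have "normal_words (Suc n) = (\<lambda>(a, w). a # w) ` ?S"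
  proof (intro equalityI subsetI)
    fix x assume "x \<in> normal_words (Suc n)"
    then obtain a w where "x = a # w" "a \<in> letters" "may_precede a w" "normal_word w" "length w = n"
      by (auto simp: normal_words_def words_def length_Suc_conv)
    then show "x \<in> (\<lambda>(a, w). a # w) ` ?S"
      by (auto simp: normal_words_def words_def dest: normal_word_is_word)
  qed (auto simp: normal_words_def words_def dest: normal_word_is_word)
  moreover have "inj_on (\<lambda>(a, w). a # w) ?S"
    by (rule inj_onI) auto
  ultimately show ?thesis
    by (simp add: card_image card_SigmaI letters_def)
qed

lemma normal_word_headed_by_7: "normal_word w \<Longrightarrow> w = [] \<or> hd w = 7 \<Longrightarrow> set w \<subseteq> {7}"
  by (induction w) (auto simp: may_precede_def)

lemma normal_word_replicate_7: "normal_word (replicate n 7)"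
proof (induction n)
  case (Suc n)
  have "may_precede 7 (replicate n 7)"
    by (cases n) (simp_all add: may_precede_def)
  with Suc show ?case by simp
qed simp

lemma card_may_precede_7: "card {w \<in> normal_words n. may_precede 7 w} = 1"
proof -
  have "{w \<in> normal_words n. may_precede 7 w} = {replicate n 7}"
  proof (intro equalityI subsetI)
    fix w :: "nat list" assume w: "w \<in> {w \<in> normal_words n. may_precede 7 w}"
    then have "set w \<subseteq> {7}" and "length w = n"
      using normal_word_headed_by_7[of w] by (auto simp: normal_words_def words_def may_precede_def)
    then show "w \<in> {replicate n 7}"
      by (auto intro: replicate_length_same[symmetric])
  next
    fix w :: "nat list" assume "w \<in> {replicate n 7}"
    then show "w \<in> {w \<in> normal_words n. may_precede 7 w}"
      using normal_word_replicate_7[of n] normal_word_is_word[OF normal_word_replicate_7[of n]]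
      by (cases n) (auto simp: normal_words_def words_def may_precede_def)
  qed
  then show ?thesis by simp
qed

lemma card_may_precede_6:
  "card {w \<in> normal_words n. may_precede 6 w} + card {w \<in> normal_words n. w \<noteq> [] \<and> hd w = 1} =
    card (normal_words n)"
proof -
  let ?H = "{w \<in> normal_words n. w \<noteq> [] \<and> hd w = 1}"
  have "{w \<in> normal_words n. may_precede 6 w} = normal_words n - ?H"
    by (auto simp: may_precede_def)
  moreover have "card ?H \<le> card (normal_words n)"
    by (rule card_mono) auto
  ultimately show ?thesis
    by (simp add: card_Diff_subset)
qed

lemma card_normal_words_head_1:
  "card {w \<in> normal_words (Suc n). w \<noteq> [] \<and> hd w = 1} = card (normal_words n)"
proof -
  have "{w \<in> normal_words (Suc n). w \<noteq> [] \<and> hd w = 1} = (\<lambda>w. 1 # w) ` normal_words n"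
  proof (intro equalityI subsetI)
    fix x :: "nat list" assume x: "x \<in> {w \<in> normal_words (Suc n). w \<noteq> [] \<and> hd w = 1}"
    then obtain w where "x = 1 # w" by (cases x) auto
    with x show "x \<in> (\<lambda>w. 1 # w) ` normal_words n"
      by (auto simp: normal_words_def words_def)
  qed (auto simp: normal_words_def words_def may_precede_def)
  then show ?thesis
    by (simp add: card_image)
qed

lemma card_normal_words_recurrence:
  "card (normal_words (Suc (Suc n))) + card (normal_words n) = 6 * card (normal_words (Suc n)) + 1"
proof -
  have other: "{w \<in> normal_words m. may_precede a w} = normal_words m" if "a \<noteq> 6" "a \<noteq> 7" for a m
    using that by (simp add: may_precede_def)
  have "card (normal_words (Suc m)) + card {w \<in> normal_words m. w \<noteq> [] \<and> hd w = 1} =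
      6 * card (normal_words m) + 1" for m
    using card_may_precede_6[of m]
    by (simp add: card_normal_words_Suc letters_eq other card_may_precede_7)
  from this[of "Suc n"] show ?thesis
    unfolding card_normal_words_head_1 .
qed

lemma normal_words_0: "normal_words 0 = {[]}"
  by (auto simp: normal_words_def words_def)

lemma card_normal_words_1: "card (normal_words 1) = 7"
proof -
  have "{w \<in> normal_words 0. may_precede a w} = {[]}" for a
    by (auto simp: normal_words_0 may_precede_def)
  then show ?thesis
    using card_normal_words_Suc[of 0] by (simp add: letters_def)
qed

unbundle fps_syntax

lemma inverse_cubic_eq_Abs_fps:
  fixes a :: "nat \<Rightarrow> 'a::field"
  assumes a0: "a 0 = 1" and a1: "a 1 = 7" and rec: "\<And>n. a (n + 2) + a n = 6 * a (n + 1) + 1"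
  shows "inverse (1 - 7 * fps_X + 7 * fps_X ^ 2 - fps_X ^ 3) = Abs_fps a"
proof (rule fps_inverse_unique)
  have quadratic: "(1 - 6 * fps_X + fps_X ^ 2) * Abs_fps a = Abs_fps (\<lambda>_. 1)"
  proof (rule fps_ext)
    fix n
    show "((1 - 6 * fps_X + fps_X ^ 2) * Abs_fps a) $ n = Abs_fps (\<lambda>_. 1) $ n"
    proof (cases "n < 2")
      case True
      then have "n = 0 \<or> n = 1" by auto
      then show ?thesis
        using a0 a1 by (auto simp: algebra_simps fps_X_power_mult_nth)
    next
      case False
      then obtain m where "n = m + 2"
        by (metis add.commute le_add_diff_inverse not_less)
      then show ?thesis
        using rec[of m] by (simp add: algebra_simps fps_X_power_mult_nth numeral_2_eq_2 fps_numeral_fps_const)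
    qed
  qed
  have "1 - 7 * fps_X + 7 * fps_X ^ 2 - fps_X ^ 3 = (1 - fps_X) * (1 - 6 * fps_X + fps_X ^ 2 :: 'a fps)"
    by (simp add: algebra_simps power2_eq_square power3_eq_cube)
  then have "(1 - 7 * fps_X + 7 * fps_X ^ 2 - fps_X ^ 3) * Abs_fps a = (1 - fps_X) * Abs_fps (\<lambda>_. 1 :: 'a)"
    by (simp add: mult.assoc quadratic)
  also have "\<dots> = 1"
    using inverse_mult_eq_1'[of "1 - fps_X :: 'a fps"] by (simp add: fps_inverse_one_minus_fps_X)
  finally show "(1 - 7 * fps_X + 7 * fps_X ^ 2 - fps_X ^ 3) * Abs_fps a = 1" .
qed

theorem proposition4p2:
  shows "hilbert_series TYPE('k::field) =
    inverse (1 - 7 * fps_X + 7 * fps_X ^ 2 - fps_X ^ 3)"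
proof -
  have "hilbert_series TYPE('k) = Abs_fps (\<lambda>n. of_nat (card (normal_words n)))"
    by (simp add: hilbert_series_def hilb_dim_eq_card_normal_words)
  also have "\<dots> = inverse (1 - 7 * fps_X + 7 * fps_X ^ 2 - fps_X ^ 3)"
  proof (rule inverse_cubic_eq_Abs_fps[symmetric])
    show "of_nat (card (normal_words (n + 2))) + of_nat (card (normal_words n)) =
        6 * of_nat (card (normal_words (n + 1))) + (1 :: rat)" for n
      using arg_cong[OF card_normal_words_recurrence[of n], of "of_nat :: nat \<Rightarrow> rat"] by simp
  qed (use card_normal_words_1 in \<open>simp_all add: normal_words_0\<close>)
  finally show ?thesis .
qed

end
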